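(* No single-threshold constant-approximation is possible on the $\overline{\mathcal{G}}$ class: there is no constant $c>0$ such that for every horizon $H\in\overline{\mathcal{G}}$ and every value distribution $\mathcal{D}$ there exists a threshold $\pi$ with $\mathbb{E}X_{\tau_\pi}\ge c\,\mathbb{E}M_H$.
   Context: IID prophet inequality with random horizon: $X$ is a nonnegative integrable random variable with distribution $\mathcal{D}$, $X_1,X_2,\dots$ i.i.d. copies. A horizon is a random variable $H$ supported on a subset of $\mathbb{N}=\{1,2,\dots\}$ with $\mathbb{E}H<\infty$, independent of the $X_i$. A stopping rule $\tau$ is adapted to $\mathcal{F}_i=\sigma(\mathbb{1}_{\{H=0\}},X_1,\dots,\mathbb{1}_{\{H=i-1\}},X_i)$ (the gambler must decide at step $i$ before learning whether $H=i$), the reward is $Y_\tau$ with $Y_i=X_i\mathbb{1}_{\{H\ge i\}}$, $Y_\infty=0$, and $\mathbb{E}X_\tau:=\mathbb{E}Y_\tau$. The prophet gets $\mathbb{E}M_H$, $M_H=\max_{i\le H}X_i$. A single-threshold algorithm with threshold $\pi$ (chosen knowing $\mathcal{D}$ and the law of $H$) is $\tau_\pi=\inf\{i: Y_i\ge\pi\}$. The $\overline{\mathcal{G}}$ class: $H\in\overline{\mathcal{G}}$ iff $\mathbb{E}[t^G]\le\mathbb{E}[t^H]$ for all $t\in(0,1)$, where $G$ is geometric on $\mathbb{N}$ with mean $\mu=\mathbb{E}H$, $\mathbb{P}(G=h)=\frac1\mu(1-\frac1\mu)^{h-1}$. *)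

theory Defs
  imports "HOL-Probability.Probability"
begin

definition horizon :: "nat pmf \<Rightarrow> bool" where
  "horizon H \<longleftrightarrow> set_pmf H \<subseteq> {1..} \<and> integrable (measure_pmf H) real"

text \<open>E[t^G] for G geometric on {1,2,...} with mean mu: sum over h>=1 of (1/mu)(1-1/mu)^(h-1) t^h.\<close>
definition geom_pgf :: "real \<Rightarrow> real \<Rightarrow> real" where
  "geom_pgf mu t = (\<Sum>h. (1/mu) * (1 - 1/mu)^h * t^(Suc h))"

definition Gbar :: "nat pmf \<Rightarrow> bool" where
  "Gbar H \<longleftrightarrow> (\<forall>t\<in>{0<..<1::real}.
     geom_pgf (measure_pmf.expectation H real) t \<le> measure_pmf.expectation H (\<lambda>h. t ^ h))"

definition value_dist :: "real measure \<Rightarrow> bool" where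
  "value_dist D \<longleftrightarrow> prob_space D \<and> sets D = sets borel \<and> (AE x in D. 0 \<le> x) \<and> integrable D (\<lambda>x. x)"

text \<open>Joint law of (X_1, X_2, ...) (index 0 unused) and the independent horizon H.\<close>
definition joint :: "real measure \<Rightarrow> nat pmf \<Rightarrow> ((nat \<Rightarrow> real) \<times> nat) measure" where
  "joint D H = (PiM UNIV (\<lambda>_::nat. D)) \<Otimes>\<^sub>M measure_pmf H"

definition Yv :: "(nat \<Rightarrow> real) \<Rightarrow> nat \<Rightarrow> nat \<Rightarrow> real" where
  "Yv xs h i = (if i \<le> h then xs i else 0)"

definition thr_reward :: "real \<Rightarrow> (nat \<Rightarrow> real) \<times> nat \<Rightarrow> real" where
  "thr_reward p \<omega> = (let xs = fst \<omega>; h = snd \<omega> in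
     if \<exists>i\<ge>1. Yv xs h i \<ge> p then Yv xs h (LEAST i. i \<ge> 1 \<and> Yv xs h i \<ge> p) else 0)"

definition prophet :: "(nat \<Rightarrow> real) \<times> nat \<Rightarrow> real" where
  "prophet \<omega> = Max (fst \<omega> ` {1..snd \<omega>})"

end

(* Fix K >= 1 and M = 2K(K+1).  The values are M^z, z <= K, with P(X >= M^z) = M^-z, and the
   horizon is M^k with probability (K+1) / (M^k b_k (b_k + 1)) for 1 <= k <= K, where
   b_k = K - k + 1, and 1 otherwise.

   A threshold in (M^(j-1), M^j] earns E[X; X >= M^j] <= b_j times the expected number of values
   it inspects, which is at most min (M^k) (M^j) when the horizon is M^k.  Because the weights
   1 / (b (b + 1)) telescope, every threshold earns at most 3 (K + 1) in expectation.
   The prophet facing horizon M^k sees some value >= M^l with probability at least M^(k-l) / 2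
   for every l >= k, so E[max] >= b_k M^k / 4, and the horizon weights turn this into
   E M_H >= (K + 1) (H_(K+1) - 1) / 4, with H_n the harmonic numbers.  The ratio is O(1 / log K).

   The horizon lies in Gbar because it equals 1 except with probability at most 1/4: comparing
   E[t^H] with the geometric generating function reduces, after writing t = 1 - s, to the
   concavity of x -> 4x / (4 + x), applied at the weighted mean of the points (M^k - 1) s. *)

theory Submission
  imports Defs "HOL-Analysis.Harmonic_Numbers"
begin

lemma Yv_Suc_Suc: "Yv xs (Suc h) (Suc i) = Yv (\<lambda>i. xs (Suc i)) h i"
  by (simp add: Yv_def)

lemma thr_reward_horizon_0: "thr_reward p (xs, 0) = 0"
proof -
  have "Yv xs 0 (LEAST i. 1 \<le> i \<and> p \<le> Yv xs 0 i) = 0" if "\<exists>i\<ge>1. p \<le> Yv xs 0 i"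
    using LeastI_ex[OF that[unfolded atLeast_iff]] by (auto simp: Yv_def)
  then show ?thesis
    by (simp add: thr_reward_def)
qed

lemma thr_reward_horizon_Suc:
  "thr_reward p (xs, Suc h) = (if p \<le> xs 1 then xs 1 else thr_reward p (\<lambda>i. xs (Suc i), h))"
proof (cases "p \<le> xs 1")
  case True
  then have "(LEAST i. 1 \<le> i \<and> p \<le> Yv xs (Suc h) i) = 1"
    by (intro Least_equality) (auto simp: Yv_def)
  moreover have "\<exists>i\<ge>1. p \<le> Yv xs (Suc h) i"
    using True by (intro exI[of _ 1]) (simp add: Yv_def)
  ultimately show ?thesis
    using True by (simp add: thr_reward_def Yv_def)
next
  case False
  let ?P = "\<lambda>i. 1 \<le> i \<and> p \<le> Yv xs (Suc h) i"
  let ?Q = "\<lambda>i. 1 \<le> i \<and> p \<le> Yv (\<lambda>i. xs (Suc i)) h i"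
  have P_Suc: "?P (Suc i) \<longleftrightarrow> ?Q i" for i
    using False by (cases i) (auto simp: Yv_def)
  have P_0: "\<not> ?P 0"
    by simp
  then have ex: "(\<exists>i. ?P i) \<longleftrightarrow> (\<exists>i. ?Q i)"
    using P_Suc by (metis not0_implies_Suc)
  have "(LEAST i. ?P i) = Suc (LEAST i. ?Q i)" if "\<exists>i. ?Q i"
    using that P_Suc Least_Suc[of ?P, OF _ P_0] by auto
  with ex False show ?thesis
    by (auto simp add: thr_reward_def Yv_Suc_Suc Let_def)
qed

text \<open>The values are indexed from 0 here but from 1 in \<^const>\<open>thr_reward\<close>.\<close>

primrec thr_gain :: "real \<Rightarrow> nat \<Rightarrow> (nat \<Rightarrow> real) \<Rightarrow> real" where
  "thr_gain p 0 \<omega> = 0"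
| "thr_gain p (Suc h) \<omega> = (if p \<le> \<omega> 0 then \<omega> 0 else thr_gain p h (\<lambda>i. \<omega> (Suc i)))"

lemma thr_reward_eq_thr_gain: "thr_reward p (xs, h) = thr_gain p h (\<lambda>i. xs (Suc i))"
  by (induction h arbitrary: xs) (simp_all add: thr_reward_horizon_0 thr_reward_horizon_Suc)

lemma sum_power_le_twice_top: "(2::real) \<le> M \<Longrightarrow> (\<Sum>l\<le>n. M^l) \<le> 2 * M^n"
proof (induction n)
  case (Suc n)
  have "2 * M^n \<le> M^Suc n"
    using Suc.prems by (simp add: mult_right_mono)
  then show ?case
    using Suc.IH[OF Suc.prems] by simp
qed simp

lemma sum_power_below_le: "(2::real) \<le> M \<Longrightarrow> (\<Sum>l\<le>n. if M^l \<le> P then M^l else 0) \<le> 2 * max P 0"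
proof (induction n)
  case 0
  then show ?case
    by (cases "1 \<le> P") auto
next
  case (Suc n)
  show ?case
  proof (cases "M^Suc n \<le> P")
    case True
    have "(\<Sum>l\<le>Suc n. if M^l \<le> P then M^l else 0) \<le> (\<Sum>l\<le>Suc n. M^l)"
      using Suc.prems by (intro sum_mono) auto
    also have "\<dots> \<le> 2 * M^Suc n"
      by (rule sum_power_le_twice_top[OF Suc.prems])
    finally show ?thesis
      using True by simp
  qed (use Suc in simp)
qed

lemma sum_thresholds_le_Max:
  fixes M :: real and xs :: "nat \<Rightarrow> real"
  assumes "1 \<le> N" "2 \<le> M"
  shows "(1/2) * (\<Sum>l\<in>{k..K}. M^l * indicator {xs. \<exists>i\<in>{1..N}. M^l \<le> xs i} xs)
    \<le> max (Max (xs ` {1..N})) 0"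
proof -
  let ?P = "Max (xs ` {1..N})"
  have "M^l * indicator {xs. \<exists>i\<in>{1..N}. M^l \<le> xs i} xs \<le> (if M^l \<le> ?P then M^l else 0)" for l
  proof (cases "\<exists>i\<in>{1..N}. M^l \<le> xs i")
    case True
    then obtain i where "i \<in> {1..N}" "M^l \<le> xs i"
      by blast
    moreover from \<open>i \<in> {1..N}\<close> have "xs i \<le> ?P"
      by (intro Max_ge) simp_all
    ultimately have "M^l \<le> ?P"
      by linarith
    then show ?thesis
      using True by (simp add: indicator_def)
  qed (use assms in \<open>auto simp: indicator_def\<close>)
  then have "(\<Sum>l\<in>{k..K}. M^l * indicator {xs. \<exists>i\<in>{1..N}. M^l \<le> xs i} xs)
      \<le> (\<Sum>l\<in>{k..K}. if M^l \<le> ?P then M^l else 0)"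
    by (rule sum_mono)
  also have "\<dots> \<le> (\<Sum>l\<le>K. if M^l \<le> ?P then M^l else 0)"
    using assms by (intro sum_mono2) auto
  also have "\<dots> \<le> 2 * max ?P 0"
    by (rule sum_power_below_le[OF assms(2)])
  finally show ?thesis
    by simp
qed

lemma integral_le_enn2real_nn_integral:
  fixes f :: "'a \<Rightarrow> real"
  assumes "f \<in> borel_measurable M"
  shows "integral\<^sup>L M f \<le> enn2real (\<integral>\<^sup>+ x. f x \<partial>M)"
proof (cases "integrable M f")
  case True
  then have "integral\<^sup>L M f \<le> integral\<^sup>L M (\<lambda>x. max (f x) 0)"
    by (intro integral_mono) auto
  also have "\<dots> = enn2real (\<integral>\<^sup>+ x. max (f x) 0 \<partial>M)"
    using assms by (intro integral_eq_nn_integral) auto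
  finally show ?thesis
    by (simp add: ennreal_max_0)
qed (simp add: not_integrable_integral_eq)

abbreviation iid_seq :: "real measure \<Rightarrow> (nat \<Rightarrow> real) measure" where
  "iid_seq D \<equiv> PiM UNIV (\<lambda>_::nat. D)"

locale value_law =
  fixes D :: "real measure"
  assumes prob_space_law: "prob_space D" and sets_law: "sets D = sets borel"
begin

sublocale sequence_space D
  by (simp add: sequence_space_def product_prob_space_def product_prob_space_axioms_def
      product_sigma_finite_def prob_space_law prob_space_imp_sigma_finite)

lemma space_iid_seq: "space (iid_seq D) = UNIV"
  using sets_eq_imp_space_eq[OF sets_law] by (simp add: space_PiM)

lemma measurable_law_eq: "measurable D N = measurable borel N"
  by (rule measurable_cong_sets[OF sets_law refl])

lemma coordinate_measurable: "(\<lambda>\<omega>. \<omega> i) \<in> borel_measurable (iid_seq D)"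
  using measurable_component_singleton[of i UNIV "\<lambda>_. D"]
    measurable_cong_sets[OF refl sets_law, of "iid_seq D"]
  by simp

lemma shift_measurable: "(\<lambda>\<omega>. \<lambda>i. \<omega> (Suc i)) \<in> iid_seq D \<rightarrow>\<^sub>M iid_seq D"
  by (rule measurable_PiM_single') (auto simp: space_PiM)

lemma thr_gain_measurable: "thr_gain p h \<in> borel_measurable (iid_seq D)"
proof (induction h)
  case (Suc h)
  have "(\<lambda>\<omega>. thr_gain p h (\<lambda>i. \<omega> (Suc i))) \<in> borel_measurable (iid_seq D)"
    using measurable_comp[OF shift_measurable Suc] by (simp add: comp_def)
  moreover have "{\<omega> \<in> space (iid_seq D). p \<le> \<omega> 0} \<in> sets (iid_seq D)"
    using coordinate_measurable by measurable
  ultimately show ?case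
    using coordinate_measurable by (simp add: measurable_If)
qed simp

lemma snd_measurable_count_space: "snd \<in> joint D H \<rightarrow>\<^sub>M count_space UNIV"
  using measurable_snd[of "iid_seq D" "measure_pmf H"]
    measurable_cong_sets[OF refl sets_measure_pmf_count_space, of "joint D H"]
  by (simp add: joint_def)

lemma thr_reward_measurable: "thr_reward p \<in> borel_measurable (joint D H)"
proof -
  have "(\<lambda>x. thr_gain p (snd x) (\<lambda>i. fst x (Suc i))) \<in> borel_measurable (joint D H)"
  proof (rule measurable_compose_countable'[where f="\<lambda>h x. thr_gain p h (\<lambda>i. fst x (Suc i))"])
    show "(\<lambda>x. thr_gain p h (\<lambda>i. fst x (Suc i))) \<in> borel_measurable (joint D H)" for h
      using measurable_comp[OF measurable_comp[OF measurable_fst shift_measurable]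
          thr_gain_measurable]
      by (simp add: comp_def joint_def)
  qed (auto intro: snd_measurable_count_space)
  then show ?thesis
    by (simp add: thr_reward_eq_thr_gain[symmetric] split_beta')
qed

lemma prophet_measurable: "prophet \<in> borel_measurable (joint D H)"
proof -
  have "(\<lambda>x. Max ((\<lambda>i. fst x i) ` {1..snd x})) \<in> borel_measurable (joint D H)"
  proof (rule measurable_compose_countable'[where f="\<lambda>h x. Max ((\<lambda>i. fst x i) ` {1..h})"])
    show "(\<lambda>x. Max ((\<lambda>i. fst x i) ` {1..h})) \<in> borel_measurable (joint D H)" for h
      using measurable_comp[OF measurable_fst coordinate_measurable]
      by (intro borel_measurable_Max) (auto simp: comp_def joint_def)
  qed (auto intro: snd_measurable_count_space)
  then show ?thesis
    by (simp add: prophet_def[abs_def])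
qed

lemma nn_integral_iid_seq_case_nat:
  assumes g: "g \<in> borel_measurable (iid_seq D)"
  shows "(\<integral>\<^sup>+ \<omega>. g \<omega> \<partial>iid_seq D) = (\<integral>\<^sup>+ x. \<integral>\<^sup>+ \<omega>. g (case_nat x \<omega>) \<partial>iid_seq D \<partial>D)"
proof -
  have cons: "(\<lambda>y. case_nat (fst y) (snd y)) \<in> D \<Otimes>\<^sub>M iid_seq D \<rightarrow>\<^sub>M iid_seq D"
    by (rule measurable_case_nat') (rule measurable_fst, rule measurable_snd)
  have "(\<integral>\<^sup>+ \<omega>. g \<omega> \<partial>iid_seq D)
      = (\<integral>\<^sup>+ \<omega>. g \<omega> \<partial>distr (D \<Otimes>\<^sub>M iid_seq D) (iid_seq D) (\<lambda>y. case_nat (fst y) (snd y)))"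
    using PiM_iter by (simp add: split_beta')
  also have "\<dots> = (\<integral>\<^sup>+ y. g (case_nat (fst y) (snd y)) \<partial>(D \<Otimes>\<^sub>M iid_seq D))"
    using cons g by (simp add: nn_integral_distr)
  also have "\<dots> = (\<integral>\<^sup>+ x. \<integral>\<^sup>+ \<omega>. g (case_nat x \<omega>) \<partial>iid_seq D \<partial>D)"
    using nn_integral_fst[OF measurable_comp[OF cons g]] by (simp add: comp_def)
  finally show ?thesis .
qed

lemma nn_integral_iid_seq_shift:
  assumes g: "g \<in> borel_measurable (iid_seq D)"
  shows "(\<integral>\<^sup>+ \<omega>. g (\<lambda>i. \<omega> (Suc i)) \<partial>iid_seq D) = (\<integral>\<^sup>+ \<omega>. g \<omega> \<partial>iid_seq D)"
proof -
  have "(\<lambda>\<omega>. g (\<lambda>i. \<omega> (Suc i))) \<in> borel_measurable (iid_seq D)"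
    using measurable_comp[OF shift_measurable g] by (simp add: comp_def)
  then show ?thesis
    using prob_space.emeasure_space_1[OF prob_space_law]
    by (subst nn_integral_iid_seq_case_nat) simp_all
qed

lemma nn_integral_thr_gain_Suc:
  "(\<integral>\<^sup>+ \<omega>. thr_gain p (Suc h) \<omega> \<partial>iid_seq D) =
     (\<integral>\<^sup>+ x. ennreal (if p \<le> x then x else 0) \<partial>D)
     + emeasure D {x. x < p} * (\<integral>\<^sup>+ \<omega>. thr_gain p h \<omega> \<partial>iid_seq D)"
proof -
  let ?G = "\<integral>\<^sup>+ \<omega>. thr_gain p h \<omega> \<partial>iid_seq D"
  have "(\<lambda>\<omega>. ennreal (thr_gain p (Suc h) \<omega>)) \<in> borel_measurable (iid_seq D)"
    using thr_gain_measurable by measurable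
  from nn_integral_iid_seq_case_nat[OF this]
  have "(\<integral>\<^sup>+ \<omega>. thr_gain p (Suc h) \<omega> \<partial>iid_seq D)
      = (\<integral>\<^sup>+ x. \<integral>\<^sup>+ \<omega>. ennreal (if p \<le> x then x else thr_gain p h \<omega>) \<partial>iid_seq D \<partial>D)"
    by (simp cong: if_cong)
  also have "\<dots> = (\<integral>\<^sup>+ x. ennreal (if p \<le> x then x else 0) + indicator {x. x < p} x * ?G \<partial>D)"
    using P.emeasure_space_1 by (intro nn_integral_cong) (auto simp: indicator_def)
  also have "\<dots> = (\<integral>\<^sup>+ x. ennreal (if p \<le> x then x else 0) \<partial>D)
      + (\<integral>\<^sup>+ x. indicator {x. x < p} x * ?G \<partial>D)"
    by (intro nn_integral_add) (simp_all add: measurable_law_eq)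
  also have "(\<integral>\<^sup>+ x. indicator {x. x < p} x * ?G \<partial>D) = emeasure D {x. x < p} * ?G"
    using sets_law by (subst nn_integral_multc) auto
  finally show ?thesis .
qed

lemma nn_integral_thr_gain:
  "(\<integral>\<^sup>+ \<omega>. thr_gain p h \<omega> \<partial>iid_seq D) =
     (\<integral>\<^sup>+ x. ennreal (if p \<le> x then x else 0) \<partial>D) * (\<Sum>i<h. emeasure D {x. x < p} ^ i)"
proof (induction h)
  case (Suc h)
  show ?case
    unfolding nn_integral_thr_gain_Suc Suc sum.lessThan_Suc_shift
    by (simp add: sum_distrib_left algebra_simps)
qed simp

lemma nn_integral_thr_reward_horizon:
  "(\<integral>\<^sup>+ xs. thr_reward p (xs, h) \<partial>iid_seq D) =
     (\<integral>\<^sup>+ x. ennreal (if p \<le> x then x else 0) \<partial>D) * (\<Sum>i<h. emeasure D {x. x < p} ^ i)"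
proof -
  have "(\<lambda>\<omega>. ennreal (thr_gain p h \<omega>)) \<in> borel_measurable (iid_seq D)"
    using thr_gain_measurable by measurable
  from nn_integral_iid_seq_shift[OF this] show ?thesis
    unfolding thr_reward_eq_thr_gain nn_integral_thr_gain .
qed

lemma prob_space_joint: "prob_space (joint D H)"
  unfolding joint_def by (intro prob_space_pair P.prob_space_axioms prob_space_measure_pmf)

lemma pair_sigma_finite_joint: "pair_sigma_finite (iid_seq D) (measure_pmf H)"
  by (simp add: pair_sigma_finite_def P.sigma_finite_measure_axioms
      prob_space_imp_sigma_finite[OF prob_space_measure_pmf])

lemma nn_integral_joint:
  assumes "g \<in> borel_measurable (joint D H)"
  shows "(\<integral>\<^sup>+ y. g y \<partial>joint D H) = (\<integral>\<^sup>+ h. (\<integral>\<^sup>+ xs. g (xs, h) \<partial>iid_seq D) \<partial>measure_pmf H)"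
proof -
  interpret pair_sigma_finite "iid_seq D" "measure_pmf H"
    by (rule pair_sigma_finite_joint)
  show ?thesis
    using assms unfolding joint_def by (rule nn_integral_snd[symmetric])
qed

lemma AE_joint:
  assumes "{y \<in> space (joint D H). Q y} \<in> sets (joint D H)"
    and "AE xs in iid_seq D. \<forall>h\<in>set_pmf H. Q (xs, h)"
  shows "AE y in joint D H. Q y"
proof -
  interpret pair_sigma_finite "iid_seq D" "measure_pmf H"
    by (rule pair_sigma_finite_joint)
  show ?thesis
    using assms unfolding joint_def
    by (intro AE_pair_measure) (auto elim!: eventually_mono intro!: AE_pmfI)
qed

lemma AE_iid_seq:
  assumes "AE x in D. P x"
  shows "AE xs in iid_seq D. \<forall>i. P (xs i)"
  unfolding AE_all_countable using AE_component[OF _ assms] by simp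

lemma sets_all_less: "{xs. \<forall>i\<in>{1..N}. xs i < v} \<in> sets (iid_seq D)"
proof -
  have "{xs \<in> space (iid_seq D). \<forall>i\<in>{1..N}. xs i < v} \<in> sets (iid_seq D)"
    using coordinate_measurable by measurable
  then show ?thesis
    by (simp add: space_iid_seq)
qed

lemma measure_all_less: "measure (iid_seq D) {xs. \<forall>i\<in>{1..N}. xs i < v} = measure D {x. x < v} ^ N"
proof -
  have "emeasure (iid_seq D) {xs \<in> space (iid_seq D). \<forall>i\<in>{1..N}. xs i \<in> {x. x < v}}
      = (\<Prod>i\<in>{1..N}. emeasure D {x. x < v})"
    by (rule emeasure_PiM_Collect) (auto simp: sets_law)
  then have "emeasure (iid_seq D) {xs. \<forall>i\<in>{1..N}. xs i < v} = ennreal (measure D {x. x < v} ^ N)"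
    by (simp add: space_iid_seq M.emeasure_eq_measure ennreal_power)
  then show ?thesis
    by (simp add: measure_def)
qed

lemma nn_integral_Max_ge:
  fixes M :: real
  assumes N: "1 \<le> N" and M: "2 \<le> M"
  shows "ennreal ((1/2) * (\<Sum>l\<in>{k..K}. M^l * (1 - measure D {x. x < M^l} ^ N)))
    \<le> (\<integral>\<^sup>+ xs. Max (xs ` {1..N}) \<partial>iid_seq D)"
proof -
  define E where "E l = {xs. \<exists>i\<in>{1..N}. M^l \<le> xs i}" for l
  have E_compl: "E l = space (iid_seq D) - {xs. \<forall>i\<in>{1..N}. xs i < M^l}" for l
    by (auto simp: E_def space_iid_seq not_less)
  have E_sets: "E l \<in> sets (iid_seq D)" for l
    unfolding E_compl using sets_all_less by auto
  have measure_E: "measure (iid_seq D) (E l) = 1 - measure D {x. x < M^l} ^ N" for l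
    unfolding E_compl using P.prob_compl[OF sets_all_less] measure_all_less by simp
  have integrable_term: "integrable (iid_seq D) (\<lambda>xs. M^l * indicator (E l) xs)" for l
    using E_sets by (auto simp: P.emeasure_eq_measure)
  define g where "g xs = (1/2) * (\<Sum>l\<in>{k..K}. M^l * indicator (E l) xs)" for xs
  have integrable_g: "integrable (iid_seq D) g"
    unfolding g_def
    by (rule integrable_mult_right, rule Bochner_Integration.integrable_sum, rule integrable_term)
  have "(1/2) * (\<Sum>l\<in>{k..K}. M^l * (1 - measure D {x. x < M^l} ^ N)) = integral\<^sup>L (iid_seq D) g"
    unfolding g_def integral_mult_right_zero Bochner_Integration.integral_sum[OF integrable_term]
    using E_sets by (simp add: measure_E)
  also have "ennreal \<dots> = (\<integral>\<^sup>+ xs. g xs \<partial>iid_seq D)"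
    using M by (intro nn_integral_eq_integral[OF integrable_g, symmetric])
      (auto simp: g_def intro!: sum_nonneg)
  also have "\<dots> \<le> (\<integral>\<^sup>+ xs. Max (xs ` {1..N}) \<partial>iid_seq D)"
  proof (rule nn_integral_mono)
    fix xs
    have "g xs \<le> max (Max (xs ` {1..N})) 0"
      unfolding g_def E_def by (rule sum_thresholds_le_Max[OF N M])
    then show "ennreal (g xs) \<le> ennreal (Max (xs ` {1..N}))"
      by (metis ennreal_leI ennreal_max_0 max.commute)
  qed
  finally show ?thesis .
qed

end

definition weights_pmf :: "nat \<Rightarrow> (nat \<Rightarrow> real) \<Rightarrow> nat pmf" where
  "weights_pmf K w = embed_pmf (\<lambda>z. if z \<le> K then w z else 0)"

context
  fixes K :: nat and w :: "nat \<Rightarrow> real"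
  assumes weights_nonneg: "\<And>z. z \<le> K \<Longrightarrow> 0 \<le> w z" and sum_weights: "(\<Sum>z\<le>K. w z) = 1"
begin

lemma pmf_weights_pmf: "pmf (weights_pmf K w) z = (if z \<le> K then w z else 0)"
  unfolding weights_pmf_def
proof (rule pmf_embed_pmf)
  have "(\<integral>\<^sup>+ x. ennreal (if x \<le> K then w x else 0) \<partial>count_space UNIV)
      = (\<Sum>x\<le>K. ennreal (if x \<le> K then w x else 0))"
    by (rule nn_integral_count_space') auto
  also have "\<dots> = ennreal (\<Sum>x\<le>K. w x)"
    using weights_nonneg by (subst sum_ennreal) auto
  finally show "(\<integral>\<^sup>+ x. ennreal (if x \<le> K then w x else 0) \<partial>count_space UNIV) = 1"
    using sum_weights by simp
qed (use weights_nonneg in simp)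

lemma set_weights_pmf: "set_pmf (weights_pmf K w) \<subseteq> {..K}"
  by (auto simp: set_pmf_iff pmf_weights_pmf split: if_splits)

lemma nn_integral_weights_pmf: "(\<integral>\<^sup>+ z. f z \<partial>measure_pmf (weights_pmf K w)) = (\<Sum>z\<le>K. ennreal (w z) * f z)"
proof -
  have "(\<integral>\<^sup>+ z. f z \<partial>measure_pmf (weights_pmf K w)) = (\<Sum>z\<in>{..K}. f z * ennreal (pmf (weights_pmf K w) z))"
    using set_weights_pmf by (intro nn_integral_measure_pmf_support) auto
  also have "\<dots> = (\<Sum>z\<le>K. ennreal (w z) * f z)"
    by (intro sum.cong) (auto simp: pmf_weights_pmf mult.commute)
  finally show ?thesis .
qed

lemma integral_weights_pmf: "(\<integral> z. f z \<partial>measure_pmf (weights_pmf K w)) = (\<Sum>z\<le>K. w z * f z)"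
proof -
  have "(\<integral> z. f z \<partial>measure_pmf (weights_pmf K w)) = (\<Sum>z\<in>{..K}. f z * pmf (weights_pmf K w) z)"
    using set_weights_pmf by (intro integral_measure_pmf_real) auto
  also have "\<dots> = (\<Sum>z\<le>K. w z * f z)"
    by (intro sum.cong) (auto simp: pmf_weights_pmf mult.commute)
  finally show ?thesis .
qed

end

lemma sum_atMost_split_first: "(\<Sum>k\<le>(K::nat). f k) = f 0 + (\<Sum>k\<in>{1..K}. f k)"
proof -
  have "{..K} = insert 0 {1..K}"
    by auto
  then show ?thesis
    by simp
qed

lemma one_minus_power_ge_half:
  fixes q :: real
  assumes "0 \<le> q" "q \<le> 1" "real N * q \<le> 1"
  shows "real N * q / 2 \<le> 1 - (1-q)^N"
proof -
  define x where "x = real N * q"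
  have x: "0 \<le> x" "x \<le> 1"
    using assms by (auto simp: x_def)
  have "(1-q)^N * (1 + x) \<le> (1-q)^N * (1+q)^N"
    using assms Bernoulli_inequality[of q N] by (intro mult_left_mono) (auto simp: x_def)
  also have "\<dots> = (1 - q^2)^N"
    by (simp add: power_mult_distrib[symmetric] power2_eq_square algebra_simps)
  also have "\<dots> \<le> 1"
    using assms by (intro power_le_one) (auto simp: power2_eq_square mult_le_one)
  finally have Bernoulli: "(1-q)^N * (1 + x) \<le> 1" .
  have "x * x \<le> x"
    using x by (simp add: mult_left_le_one_le)
  then have "1 \<le> (1 + x) * (1 - x / 2)"
    by (simp add: algebra_simps)
  then have "(1-q)^N \<le> ((1-q)^N * (1 + x)) * (1 - x / 2)"
    using assms by (simp add: mult.assoc mult_le_cancel_left1)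
  also have "\<dots> \<le> 1 - x / 2"
    using Bernoulli x by (simp add: mult_left_le_one_le)
  finally show ?thesis
    by (simp add: x_def)
qed

lemma one_minus_power_le_rational:
  fixes s :: real
  assumes s: "0 \<le> s" "s \<le> 1" and "1 \<le> n"
  shows "1 - (1-s)^n \<le> 2 * n * s / (2 + (real n - 1) * s)"
  using assms(3)
proof (induction n rule: dec_induct)
  case (step n)
  define d where "d = 2 + (real n - 1) * s"
  have d: "0 < d"
    using s step.hyps by (simp add: d_def add_pos_nonneg)
  have d': "0 < 2 + n * s"
    using s by (simp add: add_pos_nonneg)
  have "1 - (1-s)^Suc n = s + (1 - s) * (1 - (1-s)^n)"
    by (simp add: algebra_simps)
  also have "\<dots> \<le> s + (1 - s) * (2 * n * s / d)"
    using step.IH s by (intro add_left_mono mult_left_mono) (auto simp: d_def)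
  also have "\<dots> = s * (2 + 2 * n - (n + 1) * s) / d"
    using d by (simp add: d_def field_simps)
  also have "\<dots> \<le> 2 * (n + 1) * s / (2 + n * s)"
  proof -
    have "s * (2 + 2 * n - (n + 1) * s) * (2 + n * s) = 2 * (n + 1) * s * d - (n + 1) * n * s * s * s"
      by (simp add: d_def algebra_simps)
    moreover have "0 \<le> (n + 1) * n * s * s * s"
      using s by simp
    ultimately show ?thesis
      using d d' by (simp add: frac_le_eq divide_le_0_iff)
  qed
  finally show ?case
    by simp
qed simp

lemma one_minus_power_le_rational_simple:
  fixes s :: real
  assumes s: "0 \<le> s" "s \<le> 1" and n: "2 \<le> n"
  shows "1 - (1-s)^n \<le> 4 * n * s / (4 + n * s)"
proof -
  have "real n / 2 * s \<le> (real n - 1) * s"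
    using s n by (intro mult_right_mono) auto
  then have "2 * n * s / (2 + (real n - 1) * s) \<le> 2 * n * s / (2 + n / 2 * s)"
    using s n by (intro divide_left_mono) (auto intro!: mult_pos_pos add_pos_nonneg mult_nonneg_nonneg)
  also have "\<dots> = 4 * n * s / (4 + n * s)"
    by (simp add: field_simps)
  finally show ?thesis
    using one_minus_power_le_rational[OF s, of n] n by simp
qed

lemma ratio_le_tangent:
  fixes x x0 :: real
  assumes "0 \<le> x" "0 \<le> x0"
  shows "4 * x / (4 + x) \<le> 4 * x0 / (4 + x0) + 16 * (x - x0) / (4 + x0)^2"
proof -
  define a b where "a = 4 + x" and "b = 4 + x0"
  have "a \<noteq> 0" "b \<noteq> 0"
    using assms by (auto simp: a_def b_def)
  then have "4 * x0 / b + 16 * (x - x0) / b^2 - 4 * x / a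
      = (4 * x0 * a * b + 16 * (x - x0) * a - 4 * x * b^2) / (a * b^2)"
    by (simp add: field_simps power2_eq_square)
  also have "4 * x0 * a * b + 16 * (x - x0) * a - 4 * x * b^2 = 16 * (x - x0)^2"
    by (simp add: a_def b_def algebra_simps power2_eq_square)
  finally have "4 * x0 / b + 16 * (x - x0) / b^2 - 4 * x / a = 16 * (x - x0)^2 / (a * b^2)" .
  moreover have "0 \<le> 16 * (x - x0)^2 / (a * b^2)"
    using assms by (simp add: a_def b_def)
  ultimately show ?thesis
    by (simp add: a_def b_def)
qed

lemma weighted_one_minus_power_le:
  fixes w :: "'a \<Rightarrow> real" and n :: "'a \<Rightarrow> nat" and s :: real
  assumes "finite A" and w: "\<And>k. k \<in> A \<Longrightarrow> 0 \<le> w k" and n: "\<And>k. k \<in> A \<Longrightarrow> 2 \<le> n k"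
    and mass: "(\<Sum>k\<in>A. w k) \<le> 1/4" and s: "0 \<le> s" "s \<le> 1"
  shows "(\<Sum>k\<in>A. w k * (1 - (1-s)^n k))
    \<le> (\<Sum>k\<in>A. w k * n k) * s / (1 + (\<Sum>k\<in>A. w k * n k) * s)"
proof -
  define \<epsilon> where "\<epsilon> = (\<Sum>k\<in>A. w k)"
  define y where "y = (\<Sum>k\<in>A. w k * n k) * s"
  have y: "0 \<le> y"
    using w s by (auto simp: y_def intro!: mult_nonneg_nonneg sum_nonneg)
  have each: "w k * (1 - (1-s)^n k) \<le> w k * (4 * (n k * s) / (4 + n k * s))" if "k \<in> A" for k
    using one_minus_power_le_rational_simple[of s "n k"] w[OF that] n[OF that] s
    by (intro mult_left_mono) (auto simp: mult.assoc)
  show ?thesis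
  proof (cases "\<epsilon> = 0")
    case True
    then have "w k = 0" if "k \<in> A" for k
      using w that \<open>finite A\<close> by (simp add: \<epsilon>_def sum_nonneg_eq_0_iff)
    then show ?thesis
      using y by (simp add: y_def[symmetric])
  next
    case False
    then have \<epsilon>: "0 < \<epsilon>"
      using w by (simp add: \<epsilon>_def order.not_eq_order_implies_strict sum_nonneg)
    text \<open>The concave function \<open>x \<mapsto> 4x/(4+x)\<close> lies below its tangent at the weighted mean \<open>x0\<close>
      of the points \<open>n k * s\<close>.\<close>
    define x0 where "x0 = y / \<epsilon>"
    have x0: "0 \<le> x0"
      using y \<epsilon> by (simp add: x0_def)
    have "(\<Sum>k\<in>A. w k * (1 - (1-s)^n k))
        \<le> (\<Sum>k\<in>A. w k * (4 * x0 / (4 + x0) + 16 * (n k * s - x0) / (4 + x0)^2))"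
    proof (intro sum_mono order.trans[OF each])
      fix k assume "k \<in> A"
      then show "w k * (4 * (n k * s) / (4 + n k * s))
          \<le> w k * (4 * x0 / (4 + x0) + 16 * (n k * s - x0) / (4 + x0)^2)"
        using w s x0 by (intro mult_left_mono ratio_le_tangent) auto
    qed
    also have "\<dots> = \<epsilon> * (4 * x0 / (4 + x0)) + 16 / (4 + x0)^2 * (y - \<epsilon> * x0)"
      by (simp add: \<epsilon>_def y_def algebra_simps sum.distrib sum_subtractf sum_distrib_left
          sum_distrib_right sum_divide_distrib diff_divide_distrib add_divide_distrib)
    also have "\<dots> = 4 * \<epsilon> * y / (4 * \<epsilon> + y)"
      using \<epsilon> y by (simp add: x0_def field_simps)
    also have "\<dots> \<le> y / (1 + y)"
    proof -
      have "(4 * \<epsilon>) * (y * y) \<le> y * y"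
        using \<epsilon> mass by (intro mult_left_le_one_le) (simp_all add: \<epsilon>_def)
      then show ?thesis
        using \<epsilon> y by (simp add: frac_le_eq field_simps)
    qed
    finally show ?thesis
      by (simp add: y_def)
  qed
qed

lemma geometric_pgf_le_mixture:
  fixes w :: "nat \<Rightarrow> real" and N :: "nat \<Rightarrow> nat" and t :: real
  assumes w: "\<And>k. k \<le> K \<Longrightarrow> 0 \<le> w k" and sum_w: "(\<Sum>k\<le>K. w k) = 1"
    and N_0: "N 0 = 1" and N: "\<And>k. k \<in> {1..K} \<Longrightarrow> 3 \<le> N k"
    and tail: "(\<Sum>k\<in>{1..K}. w k) \<le> 1/4" and t: "0 < t" "t < 1"
  shows "t / ((\<Sum>k\<le>K. w k * N k) - ((\<Sum>k\<le>K. w k * N k) - 1) * t) \<le> (\<Sum>k\<le>K. w k * t ^ N k)"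
proof -
  define s where "s = 1 - t"
  define m where "m = (\<Sum>k\<in>{1..K}. w k * (N k - 1))"
  have s: "0 \<le> s" "s \<le> 1"
    using t by (auto simp: s_def)
  have m: "0 \<le> m"
    using w by (auto simp: m_def intro!: sum_nonneg)
  have N_Suc: "N k = Suc (N k - 1)" if "k \<in> {1..K}" for k
    using N[OF that] by simp
  have w_0: "w 0 = 1 - (\<Sum>k\<in>{1..K}. w k)"
    using sum_w by (simp add: sum_atMost_split_first)
  have "(\<Sum>k\<in>{1..K}. w k * N k) = (\<Sum>k\<in>{1..K}. w k + w k * (N k - 1))"
  proof (intro sum.cong refl)
    fix k assume "k \<in> {1..K}"
    then have "1 \<le> N k"
      using N by fastforce
    then show "w k * N k = w k + w k * (N k - 1)"
      by (simp add: of_nat_diff algebra_simps)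
  qed
  then have "(\<Sum>k\<le>K. w k * N k) = 1 + m"
    by (simp add: sum_atMost_split_first N_0 w_0 sum.distrib m_def)
  then have denominator: "(\<Sum>k\<le>K. w k * N k) - ((\<Sum>k\<le>K. w k * N k) - 1) * t = 1 + m * s"
    by (simp add: s_def algebra_simps)
  have "(\<Sum>k\<in>{1..K}. w k * t ^ N k) = (\<Sum>k\<in>{1..K}. t * (w k - w k * (1 - (1-s) ^ (N k - 1))))"
  proof (intro sum.cong refl)
    fix k assume "k \<in> {1..K}"
    then have "t ^ N k = t * t ^ (N k - 1)"
      by (subst N_Suc) simp_all
    then show "w k * t ^ N k = t * (w k - w k * (1 - (1-s) ^ (N k - 1)))"
      by (simp add: s_def algebra_simps)
  qed
  then have mixture: "(\<Sum>k\<le>K. w k * t ^ N k) = t * (1 - (\<Sum>k\<in>{1..K}. w k * (1 - (1-s) ^ (N k - 1))))"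
    by (simp add: sum_atMost_split_first N_0 w_0 sum_subtractf sum_distrib_left[symmetric] algebra_simps)
  have concave: "(\<Sum>k\<in>{1..K}. w k * (1 - (1-s) ^ (N k - 1))) \<le> m * s / (1 + m * s)"
    using weighted_one_minus_power_le[of "{1..K}" w "\<lambda>k. N k - 1" s] w N tail s
    by (force simp: m_def)
  have "0 < 1 + m * s"
    using m s by (simp add: add_pos_nonneg)
  then have "t / (1 + m * s) = t * (1 - m * s / (1 + m * s))"
    by (simp add: field_simps)
  also have "\<dots> \<le> t * (1 - (\<Sum>k\<in>{1..K}. w k * (1 - (1-s) ^ (N k - 1))))"
    using concave t by (intro mult_left_mono) auto
  finally show ?thesis
    unfolding denominator mixture .
qed

lemma geom_pgf_eq:
  assumes mu: "1 \<le> mu" and t: "0 < t" "t < 1"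
  shows "geom_pgf mu t = t / (mu - (mu - 1) * t)"
proof -
  define r where "r = (1 - 1/mu) * t"
  have "r \<le> t"
    using mu t by (simp add: r_def mult_left_le_one_le)
  moreover have "0 \<le> r"
    using mu t by (simp add: r_def)
  ultimately have r: "0 \<le> r" "r < 1"
    using t by simp_all
  have "(\<lambda>h. t / mu * r ^ h) sums (t / mu * (1 / (1 - r)))"
    using r by (intro sums_mult geometric_sums) simp
  moreover have "(\<lambda>h. t / mu * r ^ h) = (\<lambda>h. (1/mu) * (1 - 1/mu)^h * t^(Suc h))"
    by (simp add: r_def power_mult_distrib fun_eq_iff)
  ultimately have "geom_pgf mu t = t / mu * (1 / (1 - r))"
    unfolding geom_pgf_def by (simp add: sums_iff)
  also have "\<dots> = t / (mu - (mu - 1) * t)"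
  proof -
    have "(mu - 1) * t \<le> mu - 1"
      using mu t by (simp add: mult_right_le_one_le)
    then have "0 < mu - (mu - 1) * t"
      using t by linarith
    then show ?thesis
      using mu by (simp add: r_def field_simps)
  qed
  finally show ?thesis .
qed
lemma sum_inverse_Suc_eq_harm: "(\<Sum>i\<in>{1..n}. 1 / (real i + 1)) = harm (Suc n) - 1"
proof (induction n)
  case 0
  then show ?case
    by (simp add: harm_def)
next
  case (Suc n)
  then show ?case
    by (simp add: harm_Suc inverse_eq_divide add.commute)
qed

lemma sum_inverse_reversed_eq_harm: "(\<Sum>k\<in>{1..K}. 1 / (real K - real k + 2)) = harm (Suc K) - 1"
proof -
  have "(\<Sum>k\<in>{1..K}. 1 / (real K - real k + 2)) = (\<Sum>i\<in>{1..K}. 1 / (real K - real (K + 1 - i) + 2))"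
    by (rule sum.atLeastAtMost_rev)
  also have "\<dots> = (\<Sum>i\<in>{1..K}. 1 / (real i + 1))"
    by (intro sum.cong) (auto simp: of_nat_diff)
  finally show ?thesis
    using sum_inverse_Suc_eq_harm by simp
qed

text \<open>With \<open>M = base K\<close>, \<open>levels K k\<close> counts the value levels \<open>M^k, \<dots>, M^K\<close>.\<close>

definition base :: "nat \<Rightarrow> nat" where
  "base K = 2 * K * (K + 1)"

definition val_prob :: "nat \<Rightarrow> nat \<Rightarrow> real" where
  "val_prob K z = (if z < K then (1 / real (base K))^z * (1 - 1 / real (base K)) else (1 / real (base K))^K)"

definition levels :: "nat \<Rightarrow> nat \<Rightarrow> real" where
  "levels K k = real K - real k + 1"

definition hor_weight :: "nat \<Rightarrow> nat \<Rightarrow> real" where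
  "hor_weight K k = (real K + 1) / (real (base K) ^ k * (levels K k * (levels K k + 1)))"

definition hor_prob :: "nat \<Rightarrow> nat \<Rightarrow> real" where
  "hor_prob K k = (if k = 0 then 1 - (\<Sum>j\<in>{1..K}. hor_weight K j) else hor_weight K k)"

definition hard_values :: "nat \<Rightarrow> real measure" where
  "hard_values K = distr (measure_pmf (weights_pmf K (val_prob K))) borel (\<lambda>z. real (base K) ^ z)"

definition hard_horizon :: "nat \<Rightarrow> nat pmf" where
  "hard_horizon K = map_pmf (\<lambda>k. base K ^ k) (weights_pmf K (hor_prob K))"

text \<open>For \<open>X\<close> distributed as \<open>hard_values K\<close>: \<open>gain_above K p = E[X; X \<ge> p]\<close> and
  \<open>prob_below K p = P(X < p)\<close>.\<close>

definition gain_above :: "nat \<Rightarrow> real \<Rightarrow> real" where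
  "gain_above K p = (\<Sum>z\<le>K. val_prob K z * (if p \<le> real (base K) ^ z then real (base K) ^ z else 0))"

definition prob_below :: "nat \<Rightarrow> real \<Rightarrow> real" where
  "prob_below K p = (\<Sum>z\<le>K. val_prob K z * indicator {x. x < p} (real (base K) ^ z))"

lemma prob_space_hard_values: "prob_space (hard_values K)"
  unfolding hard_values_def by (rule measure_pmf.prob_space_distr) simp

lemma sets_hard_values: "sets (hard_values K) = sets borel"
  by (simp add: hard_values_def)

interpretation hard: value_law "hard_values K" for K
  by (intro value_law.intro prob_space_hard_values sets_hard_values)

context
  fixes K :: nat
  assumes K_ge_1: "1 \<le> K"
begin

lemma base_ge_4: "4 \<le> base K"
proof -
  have "2 * 1 * (1 + 1) \<le> 2 * K * (K + 1)"
    using K_ge_1 by (intro mult_mono) auto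
  then show ?thesis
    by (simp add: base_def)
qed

lemma real_base_ge_4: "4 \<le> real (base K)"
  using base_ge_4 by linarith

lemma K_times_Suc_div_base: "real K * (real K + 1) / real (base K) = 1/2"
proof -
  have "real (base K) = 2 * (real K * (real K + 1))"
    by (simp add: base_def algebra_simps)
  moreover have "0 < real K * (real K + 1)"
    using K_ge_1 by simp
  ultimately show ?thesis
    using K_ge_1 by simp
qed

lemma val_prob_nonneg: "0 \<le> val_prob K z"
  using real_base_ge_4 by (simp add: val_prob_def)

lemma sum_val_prob_lessThan: "j \<le> K \<Longrightarrow> (\<Sum>z<j. val_prob K z) = 1 - (1 / real (base K))^j"
  by (induction j) (simp_all add: val_prob_def algebra_simps)

lemma sum_val_prob: "(\<Sum>z\<le>K. val_prob K z) = 1"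
  using sum_val_prob_lessThan[of K] by (simp add: lessThan_Suc_atMost[symmetric] val_prob_def)

lemma val_prob_mult_power_le: "z \<le> K \<Longrightarrow> val_prob K z * real (base K) ^ z \<le> 1"
  using real_base_ge_4 by (cases "z = K") (simp_all add: val_prob_def power_one_over field_simps)

lemma levels_ge_1: "k \<le> K \<Longrightarrow> 1 \<le> levels K k"
  by (simp add: levels_def)

lemma hor_weight_nonneg: "k \<le> K \<Longrightarrow> 0 \<le> hor_weight K k"
  using levels_ge_1[of k] real_base_ge_4 by (simp add: hor_weight_def)

lemma hor_weight_mult_power:
  "k \<le> K \<Longrightarrow> hor_weight K k * real (base K) ^ k = (real K + 1) / (levels K k * (levels K k + 1))"
  using real_base_ge_4 by (simp add: hor_weight_def)

lemma hor_weight_le: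
  assumes "1 \<le> k" "k \<le> K"
  shows "hor_weight K k \<le> (real K + 1) / (2 * real (base K))"
proof -
  have "2 \<le> levels K k * (levels K k + 1)"
    using levels_ge_1[OF assms(2)] mult_mono[of 1 "levels K k" 2 "levels K k + 1"] by simp
  moreover have "real (base K) \<le> real (base K) ^ k"
    using assms real_base_ge_4 power_increasing[of 1 k "real (base K)"] by simp
  ultimately have "2 * real (base K) \<le> real (base K) ^ k * (levels K k * (levels K k + 1))"
    using real_base_ge_4 mult_mono[of 2 "levels K k * (levels K k + 1)" "real (base K)" "real (base K) ^ k"]
    by (simp add: mult.commute)
  then show ?thesis
    using real_base_ge_4 unfolding hor_weight_def by (intro divide_left_mono) auto
qed

lemma sum_hor_weight_le: "(\<Sum>k\<in>{1..K}. hor_weight K k) \<le> 1/4"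
proof -
  have "(\<Sum>k\<in>{1..K}. hor_weight K k) \<le> (\<Sum>k\<in>{1..K}. (real K + 1) / (2 * real (base K)))"
    using hor_weight_le by (intro sum_mono) auto
  also have "\<dots> = (real K * (real K + 1) / real (base K)) / 2"
    by simp
  finally show ?thesis
    by (simp add: K_times_Suc_div_base)
qed

lemma hor_prob_eq_hor_weight: "1 \<le> k \<Longrightarrow> hor_prob K k = hor_weight K k"
  by (simp add: hor_prob_def)

lemma hor_prob_nonneg: "k \<le> K \<Longrightarrow> 0 \<le> hor_prob K k"
  using sum_hor_weight_le hor_weight_nonneg by (auto simp: hor_prob_def)

lemma hor_prob_0_le: "hor_prob K 0 \<le> 1"
  using hor_weight_nonneg by (auto simp: hor_prob_def intro!: sum_nonneg)

lemma sum_hor_prob: "(\<Sum>k\<le>K. hor_prob K k) = 1"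
  by (simp add: sum_atMost_split_first hor_prob_eq_hor_weight hor_prob_def[of K 0])

lemma nn_integral_hard_values:
  "f \<in> borel_measurable borel \<Longrightarrow>
    (\<integral>\<^sup>+ x. f x \<partial>hard_values K) = (\<Sum>z\<le>K. ennreal (val_prob K z) * f (real (base K) ^ z))"
  unfolding hard_values_def
  by (subst nn_integral_distr) (simp_all add: nn_integral_weights_pmf[OF val_prob_nonneg sum_val_prob])

lemma emeasure_hard_values:
  assumes "A \<in> sets borel"
  shows "emeasure (hard_values K) A = ennreal (\<Sum>z\<le>K. val_prob K z * indicator A (real (base K) ^ z))"
proof -
  have "emeasure (hard_values K) A = (\<integral>\<^sup>+ x. indicator A x \<partial>hard_values K)"
    using assms by (simp add: sets_hard_values)
  also have "\<dots> = (\<Sum>z\<le>K. ennreal (val_prob K z) * indicator A (real (base K) ^ z))"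
    using assms by (subst nn_integral_hard_values) auto
  also have "\<dots> = ennreal (\<Sum>z\<le>K. val_prob K z * indicator A (real (base K) ^ z))"
    using val_prob_nonneg
    by (subst sum_ennreal[symmetric]) (auto simp: ennreal_mult' ennreal_indicator)
  finally show ?thesis .
qed

lemma measure_hard_values:
  "A \<in> sets borel \<Longrightarrow>
    measure (hard_values K) A = (\<Sum>z\<le>K. val_prob K z * indicator A (real (base K) ^ z))"
  using emeasure_hard_values val_prob_nonneg by (simp add: measure_def sum_nonneg)

lemma measure_hard_values_less:
  assumes "l \<le> K"
  shows "measure (hard_values K) {x. x < real (base K) ^ l} = 1 - (1 / real (base K)) ^ l"
proof -
  have "measure (hard_values K) {x. x < real (base K) ^ l} = (\<Sum>z\<in>{..K} \<inter> {..<l}. val_prob K z)"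
    using real_base_ge_4 by (simp add: measure_hard_values sum.inter_restrict indicator_def)
  also have "{..K} \<inter> {..<l} = {..<l}"
    using assms by auto
  finally show ?thesis
    using assms by (simp add: sum_val_prob_lessThan)
qed

lemma AE_hard_values: "AE x in hard_values K. 1 \<le> x \<and> x \<le> real (base K) ^ K"
proof -
  have "AE z in measure_pmf (weights_pmf K (val_prob K)).
      1 \<le> real (base K) ^ z \<and> real (base K) ^ z \<le> real (base K) ^ K"
  proof (rule AE_pmfI)
    fix z assume "z \<in> set_pmf (weights_pmf K (val_prob K))"
    then have "z \<le> K"
      using set_weights_pmf[OF val_prob_nonneg sum_val_prob] by auto
    then show "1 \<le> real (base K) ^ z \<and> real (base K) ^ z \<le> real (base K) ^ K"
      using real_base_ge_4 by (auto intro: power_increasing one_le_power)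
  qed
  then show ?thesis
    unfolding hard_values_def by (subst AE_distr_iff) auto
qed

lemma value_dist_hard_values: "value_dist (hard_values K)"
proof -
  have "finite (set_pmf (weights_pmf K (val_prob K)))"
    using set_weights_pmf[OF val_prob_nonneg sum_val_prob] by (rule finite_subset) simp
  then have "integrable (hard_values K) (\<lambda>x. x)"
    unfolding hard_values_def by (subst integrable_distr_eq) (auto intro: integrable_measure_pmf_finite)
  moreover have "AE x in hard_values K. 0 \<le> x"
    using AE_hard_values by eventually_elim auto
  ultimately show ?thesis
    using prob_space_hard_values sets_hard_values by (simp add: value_dist_def)
qed

lemma set_pmf_hard_horizon: "set_pmf (hard_horizon K) \<subseteq> (\<lambda>k. base K ^ k) ` {..K}"
  using set_weights_pmf[OF hor_prob_nonneg sum_hor_prob] by (auto simp: hard_horizon_def)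

lemma horizon_hard_horizon: "horizon (hard_horizon K)"
proof -
  have "set_pmf (hard_horizon K) \<subseteq> {1..}"
    using set_pmf_hard_horizon base_ge_4 by (auto intro!: one_le_power)
  moreover have "finite (set_pmf (hard_horizon K))"
    using set_pmf_hard_horizon by (rule finite_subset) simp
  ultimately show ?thesis
    unfolding horizon_def by (auto intro: integrable_measure_pmf_finite)
qed

lemma nn_integral_hard_horizon:
  "(\<integral>\<^sup>+ h. f h \<partial>measure_pmf (hard_horizon K)) = (\<Sum>k\<le>K. ennreal (hor_prob K k) * f (base K ^ k))"
  by (simp add: hard_horizon_def nn_integral_weights_pmf[OF hor_prob_nonneg sum_hor_prob])

lemma expectation_hard_horizon:
  "measure_pmf.expectation (hard_horizon K) f = (\<Sum>k\<le>K. hor_prob K k * f (base K ^ k))"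
  by (simp add: hard_horizon_def integral_weights_pmf[OF hor_prob_nonneg sum_hor_prob])

lemma Gbar_hard_horizon: "Gbar (hard_horizon K)"
  unfolding Gbar_def
proof
  fix t :: real
  assume t: "t \<in> {0<..<1}"
  define mu where "mu = (\<Sum>k\<le>K. hor_prob K k * real (base K ^ k))"
  have "(\<Sum>k\<le>K. hor_prob K k * 1) \<le> mu"
    unfolding mu_def using hor_prob_nonneg base_ge_4
    by (intro sum_mono mult_left_mono) (auto intro!: one_le_power)
  then have "1 \<le> mu"
    using sum_hor_prob by simp
  then have "geom_pgf mu t = t / (mu - (mu - 1) * t)"
    using t by (intro geom_pgf_eq) auto
  also have "\<dots> \<le> (\<Sum>k\<le>K. hor_prob K k * t ^ (base K ^ k))"
    unfolding mu_def
  proof (rule geometric_pgf_le_mixture[where N="\<lambda>k. base K ^ k"])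
    show "3 \<le> base K ^ k" if "k \<in> {1..K}" for k
      using that base_ge_4 power_increasing[of 1 k "base K"] by simp
    show "(\<Sum>k\<in>{1..K}. hor_prob K k) \<le> 1/4"
      using sum_hor_weight_le by (simp add: hor_prob_eq_hor_weight)
  qed (use t hor_prob_nonneg sum_hor_prob in auto)
  finally show "geom_pgf (measure_pmf.expectation (hard_horizon K) real) t
      \<le> measure_pmf.expectation (hard_horizon K) (\<lambda>h. t ^ h)"
    by (simp add: expectation_hard_horizon mu_def)
qed


lemma sum_inverse_levels:
  "j \<le> K \<Longrightarrow> (\<Sum>k\<in>{1..j}. 1 / (levels K k * (levels K k + 1))) = 1 / levels K j - 1 / (real K + 1)"
proof (induction j)
  case (Suc j)
  have "levels K j = levels K (Suc j) + 1"
    by (simp add: levels_def)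
  moreover have "1 / (b + 1) + 1 / (b * (b + 1)) = 1 / b" if "0 < b" for b :: real
  proof -
    have "b \<noteq> 0" "b + 1 \<noteq> 0"
      using that by auto
    then have "1 / (b + 1) + 1 / (b * (b + 1)) = (b + 1) / (b * (b + 1))"
      by (simp add: add_divide_distrib[symmetric] divide_simps)
    also have "\<dots> = 1 / b"
      using \<open>b + 1 \<noteq> 0\<close> by simp
    finally show ?thesis .
  qed
  ultimately show ?case
    using Suc levels_ge_1[OF Suc.prems] by simp
qed (simp add: levels_def)

lemma hor_weight_mult_power_less:
  assumes "j < k" "k \<le> K"
  shows "hor_weight K k * real (base K) ^ j \<le> (real K + 1) / real (base K)"
proof -
  have "1 \<le> levels K k * (levels K k + 1)"
    using levels_ge_1[OF assms(2)] mult_mono[of 1 "levels K k" 1 "levels K k + 1"] by simp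
  then have "(real K + 1) / (levels K k * (levels K k + 1)) \<le> (real K + 1) / 1"
    by (intro frac_le) auto
  moreover have "real (base K) ^ Suc j \<le> real (base K) ^ k"
    using assms real_base_ge_4 by (intro power_increasing) auto
  then have "real (base K) ^ j / real (base K) ^ k \<le> 1 / real (base K)"
    using real_base_ge_4 by (simp add: divide_simps mult.commute)
  ultimately have "(real K + 1) / (levels K k * (levels K k + 1)) * (real (base K) ^ j / real (base K) ^ k)
      \<le> (real K + 1) * (1 / real (base K))"
    by (intro mult_mono) auto
  moreover have "hor_weight K k * real (base K) ^ j
      = (real K + 1) / (levels K k * (levels K k + 1)) * (real (base K) ^ j / real (base K) ^ k)"
    by (simp add: hor_weight_def)
  ultimately show ?thesis
    by simp
qed

lemma sum_power_le_card:
  assumes "0 \<le> (a::real)" "a \<le> 1"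
  shows "(\<Sum>i<n. a ^ i) \<le> real n"
proof -
  have "(\<Sum>i<n. a ^ i) \<le> (\<Sum>i<n. 1)"
    using assms by (intro sum_mono power_le_one) auto
  then show ?thesis
    by simp
qed

lemma sum_power_le_inverse:
  assumes "0 \<le> (a::real)" "a < 1"
  shows "(\<Sum>i<n. a ^ i) \<le> 1 / (1 - a)"
proof -
  have "(\<Sum>i<n. a ^ i) = (a ^ n - 1) / (a - 1)"
    using assms by (intro geometric_sum) simp
  also have "\<dots> = (1 - a ^ n) / (1 - a)"
    by (rule minus_divide_divide[of "1 - a ^ n" "1 - a", simplified])
  also have "\<dots> \<le> 1 / (1 - a)"
    using assms by (intro divide_right_mono) auto
  finally show ?thesis .
qed

text \<open>A threshold in \<open>(M^(j-1), M^j]\<close> stops at the first value \<open>\<ge> M^j\<close>: the number of attempts with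
  horizon \<open>M^k\<close> is at most \<open>min (M^k) (M^j)\<close> on average.\<close>

lemma sum_hor_weight_attempts_le:
  assumes "j \<le> K"
  shows "(\<Sum>k\<in>{1..K}. hor_weight K k * (\<Sum>i<base K ^ k. (1 - (1 / real (base K)) ^ j) ^ i))
    \<le> (real K + 1) / levels K j - 1/2"
proof -
  define a where "a = 1 - (1 / real (base K)) ^ j"
  define A where "A k = (\<Sum>i<base K ^ k. a ^ i)" for k
  have a: "0 \<le> a" "a < 1"
    using real_base_ge_4 by (auto simp: a_def power_le_one)
  have "A k \<le> real (base K) ^ k" for k
    using sum_power_le_card[of a "base K ^ k"] a by (simp add: A_def)
  moreover have "A k \<le> real (base K) ^ j" for k
    using sum_power_le_inverse[OF a] real_base_ge_4 by (simp add: A_def a_def power_one_over)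
  ultimately have "hor_weight K k * A k
      \<le> (if k \<le> j then (real K + 1) / (levels K k * (levels K k + 1)) else 0) + (real K + 1) / real (base K)"
    if "k \<in> {1..K}" for k
  proof (cases "k \<le> j")
    case True
    have "hor_weight K k * A k \<le> hor_weight K k * real (base K) ^ k"
      using \<open>A k \<le> real (base K) ^ k\<close> hor_weight_nonneg that by (intro mult_left_mono) auto
    also have "\<dots> = (real K + 1) / (levels K k * (levels K k + 1))"
      using that by (simp add: hor_weight_mult_power)
    finally show ?thesis
      using True by (simp add: add_increasing2)
  next
    case False
    have "hor_weight K k * A k \<le> hor_weight K k * real (base K) ^ j"
      using \<open>A k \<le> real (base K) ^ j\<close> hor_weight_nonneg that by (intro mult_left_mono) auto
    then show ?thesis
      using False that hor_weight_mult_power_less[of j k] by simp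
  qed
  then have "(\<Sum>k\<in>{1..K}. hor_weight K k * A k)
      \<le> (\<Sum>k\<in>{1..K}. (if k \<le> j then (real K + 1) / (levels K k * (levels K k + 1)) else 0)
        + (real K + 1) / real (base K))"
    by (rule sum_mono)
  also have "\<dots> = (\<Sum>k\<in>{1..K}. (if k \<le> j then (real K + 1) / (levels K k * (levels K k + 1)) else 0))
      + real K * ((real K + 1) / real (base K))"
    by (simp only: sum.distrib) simp
  also have "(\<Sum>k\<in>{1..K}. (if k \<le> j then (real K + 1) / (levels K k * (levels K k + 1)) else 0))
      = (real K + 1) * (\<Sum>k\<in>{1..j}. 1 / (levels K k * (levels K k + 1)))"
  proof -
    have "(\<Sum>k\<in>{1..K}. (if k \<le> j then (real K + 1) / (levels K k * (levels K k + 1)) else 0))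
        = (\<Sum>k\<in>{1..K} \<inter> {k. k \<le> j}. (real K + 1) / (levels K k * (levels K k + 1)))"
      by (simp add: sum.inter_restrict)
    also have "{1..K} \<inter> {k. k \<le> j} = {1..j}"
      using assms by auto
    finally show ?thesis
      by (simp add: sum_distrib_left)
  qed
  also have "\<dots> = (real K + 1) / levels K j - 1"
    using sum_inverse_levels[OF assms] by (simp add: right_diff_distrib)
  also have "real K * ((real K + 1) / real (base K)) = 1/2"
    using K_times_Suc_div_base by (simp only: times_divide_eq_right mult.assoc)
  finally show ?thesis
    by (simp add: A_def a_def)
qed



lemma gain_above_nonneg: "0 \<le> gain_above K p"
  unfolding gain_above_def using val_prob_nonneg by (intro sum_nonneg) auto

lemma prob_below_nonneg: "0 \<le> prob_below K p"
  unfolding prob_below_def using val_prob_nonneg by (intro sum_nonneg) auto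

lemma nn_integral_gain_above:
  "(\<integral>\<^sup>+ x. ennreal (if p \<le> x then x else 0) \<partial>hard_values K) = ennreal (gain_above K p)"
proof -
  have "(\<lambda>x. ennreal (if p \<le> x then x else 0)) \<in> borel_measurable borel"
    by measurable
  then have "(\<integral>\<^sup>+ x. ennreal (if p \<le> x then x else 0) \<partial>hard_values K)
      = (\<Sum>z\<le>K. ennreal (val_prob K z) * ennreal (if p \<le> real (base K) ^ z then real (base K) ^ z else 0))"
    by (rule nn_integral_hard_values)
  also have "\<dots> = ennreal (gain_above K p)"
    unfolding gain_above_def using val_prob_nonneg
    by (subst sum_ennreal[symmetric]) (auto simp: ennreal_mult')
  finally show ?thesis .
qed

lemma emeasure_hard_values_below: "emeasure (hard_values K) {x. x < p} = ennreal (prob_below K p)"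
  unfolding prob_below_def by (rule emeasure_hard_values) simp

lemma nn_integral_thr_reward_hard:
  "(\<integral>\<^sup>+ y. thr_reward p y \<partial>joint (hard_values K) (hard_horizon K)) =
     ennreal (\<Sum>k\<le>K. hor_prob K k * (gain_above K p * (\<Sum>i<base K ^ k. prob_below K p ^ i)))"
proof -
  have horizon: "(\<integral>\<^sup>+ xs. thr_reward p (xs, h) \<partial>iid_seq (hard_values K))
      = ennreal (gain_above K p * (\<Sum>i<h. prob_below K p ^ i))" for h
    using gain_above_nonneg prob_below_nonneg
    by (simp add: hard.nn_integral_thr_reward_horizon nn_integral_gain_above emeasure_hard_values_below
        ennreal_power sum_nonneg ennreal_mult sum_ennreal)
  have "(\<lambda>y. ennreal (thr_reward p y)) \<in> borel_measurable (joint (hard_values K) (hard_horizon K))"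
    using hard.thr_reward_measurable by measurable
  then have "(\<integral>\<^sup>+ y. thr_reward p y \<partial>joint (hard_values K) (hard_horizon K))
      = (\<Sum>k\<le>K. ennreal (hor_prob K k) * ennreal (gain_above K p * (\<Sum>i<base K ^ k. prob_below K p ^ i)))"
    by (simp add: hard.nn_integral_joint nn_integral_hard_horizon horizon)
  also have "\<dots> = ennreal (\<Sum>k\<le>K. hor_prob K k * (gain_above K p * (\<Sum>i<base K ^ k. prob_below K p ^ i)))"
    using hor_prob_nonneg gain_above_nonneg prob_below_nonneg
    by (subst sum_ennreal[symmetric]) (auto simp: ennreal_mult' sum_nonneg intro!: sum.cong)
  finally show ?thesis .
qed

lemma threshold_level:
  assumes "p \<le> real (base K) ^ K"
  obtains j where "j \<le> K" "\<And>z. p \<le> real (base K) ^ z \<longleftrightarrow> j \<le> z"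
proof
  define j where "j = (LEAST z. p \<le> real (base K) ^ z)"
  show "j \<le> K"
    unfolding j_def using assms by (rule Least_le)
  show "p \<le> real (base K) ^ z \<longleftrightarrow> j \<le> z" for z
  proof
    show "p \<le> real (base K) ^ z \<Longrightarrow> j \<le> z"
      unfolding j_def by (rule Least_le)
    assume "j \<le> z"
    then have "real (base K) ^ j \<le> real (base K) ^ z"
      using real_base_ge_4 by (intro power_increasing) auto
    moreover have "p \<le> real (base K) ^ j"
      unfolding j_def using assms by (rule LeastI)
    ultimately show "p \<le> real (base K) ^ z"
      by simp
  qed
qed

context
  fixes p :: real and j :: nat
  assumes j: "j \<le> K" and level: "\<And>z. p \<le> real (base K) ^ z \<longleftrightarrow> j \<le> z"
begin

lemma gain_above_le_levels: "gain_above K p \<le> levels K j"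
proof -
  have "gain_above K p = (\<Sum>z\<le>K. (if j \<le> z then val_prob K z * real (base K) ^ z else 0))"
    unfolding gain_above_def by (intro sum.cong) (auto simp: level)
  also have "\<dots> \<le> (\<Sum>z\<le>K. (if j \<le> z then 1 else 0))"
    by (intro sum_mono) (auto simp: val_prob_mult_power_le)
  also have "\<dots> = real (card {j..K})"
  proof -
    have "{..K} \<inter> {z. j \<le> z} = {j..K}"
      by auto
    then show ?thesis
      by (simp add: sum.If_cases)
  qed
  finally show ?thesis
    using j by (simp add: levels_def of_nat_diff)
qed

lemma prob_below_eq: "prob_below K p = 1 - (1 / real (base K)) ^ j"
proof -
  have "prob_below K p = (\<Sum>z\<le>K. (if z < j then val_prob K z else 0))"
    unfolding prob_below_def
  proof (intro sum.cong refl)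
    fix z
    have "real (base K) ^ z < p \<longleftrightarrow> z < j"
      using level[of z] by auto
    then show "val_prob K z * indicator {x. x < p} (real (base K) ^ z) = (if z < j then val_prob K z else 0)"
      by (simp add: indicator_def)
  qed
  also have "\<dots> = (\<Sum>z\<in>{..K} \<inter> {..<j}. val_prob K z)"
    by (simp add: sum.inter_restrict lessThan_def)
  also have "{..K} \<inter> {..<j} = {..<j}"
    using j by auto
  finally show ?thesis
    using j by (simp add: sum_val_prob_lessThan)
qed

end

lemma expected_thr_reward_le:
  "(\<Sum>k\<le>K. hor_prob K k * (gain_above K p * (\<Sum>i<base K ^ k. prob_below K p ^ i))) \<le> 3 * (real K + 1)"
proof (cases "p \<le> real (base K) ^ K")
  case True
  then obtain j where j: "j \<le> K" and level: "\<And>z. p \<le> real (base K) ^ z \<longleftrightarrow> j \<le> z"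
    using threshold_level by blast
  define b where "b = levels K j"
  define A where "A k = (\<Sum>i<base K ^ k. prob_below K p ^ i)" for k
  have b: "1 \<le> b" "b \<le> real K + 1"
    using j by (auto simp: b_def levels_def)
  have A_nonneg: "0 \<le> A k" for k
    unfolding A_def using prob_below_nonneg by (intro sum_nonneg) auto
  have "(\<Sum>k\<le>K. hor_prob K k * A k) = hor_prob K 0 * A 0 + (\<Sum>k\<in>{1..K}. hor_weight K k * A k)"
    by (simp add: sum_atMost_split_first hor_prob_eq_hor_weight)
  also have "\<dots> \<le> 1 + ((real K + 1) / b - 1/2)"
    using hor_prob_0_le sum_hor_weight_attempts_le[OF j]
    by (intro add_mono) (simp_all add: A_def b_def prob_below_eq[OF j level])
  finally have attempts: "(\<Sum>k\<le>K. hor_prob K k * A k) \<le> 1/2 + (real K + 1) / b"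
    by simp
  have "(\<Sum>k\<le>K. hor_prob K k * (gain_above K p * A k)) = gain_above K p * (\<Sum>k\<le>K. hor_prob K k * A k)"
    by (simp add: sum_distrib_left algebra_simps)
  also have "\<dots> \<le> b * (1/2 + (real K + 1) / b)"
    using gain_above_le_levels[OF j level] attempts gain_above_nonneg hor_prob_nonneg A_nonneg b
    by (intro mult_mono) (auto simp: b_def intro!: sum_nonneg)
  also have "\<dots> = b / 2 + (real K + 1)"
    using b by (simp add: field_simps)
  also have "\<dots> \<le> 3 * (real K + 1)"
    using b by simp
  finally show ?thesis
    by (simp add: A_def)
next
  case False
  then have "gain_above K p = 0"
    unfolding gain_above_def using real_base_ge_4
    by (intro sum.neutral ballI) (auto dest: power_increasing[of _ K "real (base K)"])
  then show ?thesis
    by simp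
qed

lemma integral_thr_reward_hard_le:
  "integral\<^sup>L (joint (hard_values K) (hard_horizon K)) (thr_reward p) \<le> 3 * (real K + 1)"
proof -
  have "integral\<^sup>L (joint (hard_values K) (hard_horizon K)) (thr_reward p)
      \<le> enn2real (\<integral>\<^sup>+ y. thr_reward p y \<partial>joint (hard_values K) (hard_horizon K))"
    by (rule integral_le_enn2real_nn_integral[OF hard.thr_reward_measurable])
  also have "\<dots> = (\<Sum>k\<le>K. hor_prob K k * (gain_above K p * (\<Sum>i<base K ^ k. prob_below K p ^ i)))"
    unfolding nn_integral_thr_reward_hard
    by (auto intro!: enn2real_ennreal sum_nonneg mult_nonneg_nonneg zero_le_power hor_prob_nonneg
        gain_above_nonneg prob_below_nonneg)
  also have "\<dots> \<le> 3 * (real K + 1)"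
    by (rule expected_thr_reward_le)
  finally show ?thesis .
qed



lemma level_times_prob_max_ge:
  assumes "k \<le> l" "l \<le> K"
  shows "real (base K) ^ k / 2
    \<le> real (base K) ^ l * (1 - measure (hard_values K) {x. x < real (base K) ^ l} ^ (base K ^ k))"
proof -
  define M where "M = real (base K)"
  define q where "q = (1 / M) ^ l"
  have M: "4 \<le> M"
    using real_base_ge_4 by (simp add: M_def)
  have q: "0 \<le> q" "q \<le> 1"
    using M by (auto simp: q_def power_le_one)
  have Nq: "real (base K ^ k) * q = M ^ k / M ^ l"
    by (simp add: q_def M_def power_one_over)
  moreover have "M ^ k \<le> M ^ l"
    using assms M by (intro power_increasing) auto
  ultimately have "real (base K ^ k) * q \<le> 1"
    using M by simp
  then have "real (base K ^ k) * q / 2 \<le> 1 - (1 - q) ^ (base K ^ k)"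
    by (rule one_minus_power_ge_half[OF q])
  then have "M ^ l * (real (base K ^ k) * q / 2) \<le> M ^ l * (1 - (1 - q) ^ (base K ^ k))"
    using M by (intro mult_left_mono) auto
  moreover have "M ^ l * (real (base K ^ k) * q / 2) = M ^ l * (M ^ k / M ^ l) / 2"
    by (simp only: Nq)
  moreover have "\<dots> = M ^ k / 2"
    using M by simp
  moreover have "measure (hard_values K) {x. x < M ^ l} = 1 - q"
    using measure_hard_values_less[OF assms(2)] by (simp add: q_def M_def)
  ultimately show ?thesis
    by (simp add: M_def)
qed

lemma nn_integral_Max_hard_ge:
  assumes "1 \<le> k" "k \<le> K"
  shows "ennreal (levels K k * real (base K) ^ k / 4)
    \<le> (\<integral>\<^sup>+ xs. Max (xs ` {1..base K ^ k}) \<partial>iid_seq (hard_values K))"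
proof -
  have "levels K k * real (base K) ^ k / 4 = (1/2) * (\<Sum>l\<in>{k..K}. real (base K) ^ k / 2)"
    using assms by (simp add: levels_def of_nat_diff)
  also have "\<dots> \<le> (1/2) * (\<Sum>l\<in>{k..K}. real (base K) ^ l
      * (1 - measure (hard_values K) {x. x < real (base K) ^ l} ^ (base K ^ k)))"
    using level_times_prob_max_ge by (intro mult_left_mono sum_mono) auto
  finally have "ennreal (levels K k * real (base K) ^ k / 4) \<le> ennreal \<dots>"
    by (rule ennreal_leI)
  also have "\<dots> \<le> (\<integral>\<^sup>+ xs. Max (xs ` {1..base K ^ k}) \<partial>iid_seq (hard_values K))"
    using base_ge_4 real_base_ge_4 by (intro hard.nn_integral_Max_ge) (auto simp: one_le_power)
  finally show ?thesis .
qed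

lemma sum_hor_weight_levels:
  "(\<Sum>k\<in>{1..K}. hor_weight K k * (levels K k * real (base K) ^ k / 4)) = (real K + 1) / 4 * (harm (Suc K) - 1)"
proof -
  have "hor_weight K k * (levels K k * real (base K) ^ k / 4) = (real K + 1) / 4 * (1 / (real K - real k + 2))"
    if "k \<in> {1..K}" for k
  proof -
    define b where "b = levels K k"
    have b: "0 < b"
      using that levels_ge_1[of k] by (simp add: b_def)
    have "hor_weight K k * (b * real (base K) ^ k / 4) = (hor_weight K k * real (base K) ^ k) * b / 4"
      by (simp add: algebra_simps)
    also have "\<dots> = (real K + 1) / (b * (b + 1)) * b / 4"
      using that hor_weight_mult_power[of k] by (simp add: b_def)
    also have "\<dots> = (real K + 1) / 4 * (1 / (b + 1))"
      using b by (simp add: divide_simps)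
    also have "b + 1 = real K - real k + 2"
      by (simp add: b_def levels_def)
    finally show ?thesis
      by (simp only: b_def)
  qed
  then have "(\<Sum>k\<in>{1..K}. hor_weight K k * (levels K k * real (base K) ^ k / 4))
      = (\<Sum>k\<in>{1..K}. (real K + 1) / 4 * (1 / (real K - real k + 2)))"
    by (rule sum.cong[OF refl])
  also have "\<dots> = (real K + 1) / 4 * (\<Sum>k\<in>{1..K}. 1 / (real K - real k + 2))"
    by (rule sum_distrib_left[symmetric])
  finally show ?thesis
    by (simp only: sum_inverse_reversed_eq_harm)
qed

lemma nn_integral_prophet_hard_ge:
  "ennreal ((real K + 1) / 4 * (harm (Suc K) - 1))
    \<le> (\<integral>\<^sup>+ y. prophet y \<partial>joint (hard_values K) (hard_horizon K))"
proof -
  have nonneg: "0 \<le> levels K k * real (base K) ^ k / 4" if "k \<in> {1..K}" for k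
    using that levels_ge_1[of k] by simp
  have "ennreal ((real K + 1) / 4 * (harm (Suc K) - 1))
      = (\<Sum>k\<in>{1..K}. ennreal (hor_weight K k * (levels K k * real (base K) ^ k / 4)))"
    unfolding sum_hor_weight_levels[symmetric] using nonneg hor_weight_nonneg
    by (intro sum_ennreal[symmetric]) auto
  also have "\<dots> = (\<Sum>k\<in>{1..K}. ennreal (hor_weight K k) * ennreal (levels K k * real (base K) ^ k / 4))"
    using nonneg hor_weight_nonneg by (intro sum.cong refl ennreal_mult) auto
  also have "\<dots> \<le> (\<Sum>k\<in>{1..K}. ennreal (hor_prob K k)
      * (\<integral>\<^sup>+ xs. Max (xs ` {1..base K ^ k}) \<partial>iid_seq (hard_values K)))"
    using nn_integral_Max_hard_ge by (intro sum_mono mult_mono) (auto simp: hor_prob_eq_hor_weight)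
  also have "\<dots> \<le> (\<Sum>k\<le>K. ennreal (hor_prob K k)
      * (\<integral>\<^sup>+ xs. Max (xs ` {1..base K ^ k}) \<partial>iid_seq (hard_values K)))"
    by (intro sum_mono2) auto
  also have "\<dots> = (\<integral>\<^sup>+ y. prophet y \<partial>joint (hard_values K) (hard_horizon K))"
  proof -
    have "(\<lambda>y. ennreal (prophet y)) \<in> borel_measurable (joint (hard_values K) (hard_horizon K))"
      using hard.prophet_measurable by measurable
    then show ?thesis
      by (simp add: hard.nn_integral_joint nn_integral_hard_horizon prophet_def)
  qed
  finally show ?thesis .
qed

lemma AE_prophet_hard:
  "AE y in joint (hard_values K) (hard_horizon K). 1 \<le> prophet y \<and> prophet y \<le> real (base K) ^ K"
proof (rule hard.AE_joint)
  show "{y \<in> space (joint (hard_values K) (hard_horizon K)). 1 \<le> prophet y \<and> prophet y \<le> real (base K) ^ K}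
      \<in> sets (joint (hard_values K) (hard_horizon K))"
    using hard.prophet_measurable by measurable
  have horizon_pos: "1 \<le> h" if "h \<in> set_pmf (hard_horizon K)" for h
    using that set_pmf_hard_horizon base_ge_4 by (auto intro!: one_le_power)
  show "AE xs in iid_seq (hard_values K). \<forall>h\<in>set_pmf (hard_horizon K).
      1 \<le> prophet (xs, h) \<and> prophet (xs, h) \<le> real (base K) ^ K"
    using hard.AE_iid_seq[OF AE_hard_values]
  proof eventually_elim
    case (elim xs)
    show ?case
    proof (intro ballI conjI)
      fix h
      assume "h \<in> set_pmf (hard_horizon K)"
      then have "1 \<le> h"
        by (rule horizon_pos)
      then have "xs 1 \<le> Max (xs ` {1..h})"
        by (intro Max_ge) auto
      then show "1 \<le> prophet (xs, h)"
        using elim by (simp add: prophet_def) (meson order_trans)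
      show "prophet (xs, h) \<le> real (base K) ^ K"
        using elim \<open>1 \<le> h\<close> by (simp add: prophet_def)
    qed
  qed
qed

lemma integral_prophet_hard_ge:
  "(real K + 1) / 4 * (harm (Suc K) - 1) \<le> integral\<^sup>L (joint (hard_values K) (hard_horizon K)) prophet"
proof -
  let ?J = "joint (hard_values K) (hard_horizon K)"
  interpret J: prob_space ?J
    by (rule hard.prob_space_joint)
  have "AE y in ?J. norm (prophet y) \<le> real (base K) ^ K"
    using AE_prophet_hard by eventually_elim auto
  then have integrable: "integrable ?J prophet"
    using hard.prophet_measurable by (rule J.integrable_const_bound)
  have nonneg: "AE y in ?J. 0 \<le> prophet y"
    using AE_prophet_hard by eventually_elim simp
  have "ennreal ((real K + 1) / 4 * (harm (Suc K) - 1)) \<le> ennreal (integral\<^sup>L ?J prophet)"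
    using nn_integral_prophet_hard_ge nn_integral_eq_integral[OF integrable nonneg] by simp
  moreover have "0 \<le> integral\<^sup>L ?J prophet"
    using nonneg by (rule integral_nonneg_AE)
  ultimately show ?thesis
    by (simp add: ennreal_le_iff)
qed


end

lemma harm_Suc_exceeds: "\<exists>K\<ge>1. B < harm (Suc K) - (1::real)"
proof -
  have "eventually (\<lambda>n. B + 1 < harm n) sequentially"
    using harm_at_top by (simp add: filterlim_at_top_dense)
  then obtain N where "\<And>n. N \<le> n \<Longrightarrow> B + 1 < harm n"
    by (auto simp: eventually_sequentially)
  then have "B + 1 < harm (Suc (Suc N))"
    by simp
  then show ?thesis
    by (intro exI[of _ "Suc N"]) auto
qed

theorem theorem3:
  shows "\<not> (\<exists>c>0::real. \<forall>H D. horizon H \<and> Gbar H \<and> value_dist D \<longrightarrow>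
            (\<exists>p::real. integral\<^sup>L (joint D H) (thr_reward p) \<ge> c * integral\<^sup>L (joint D H) prophet))"
proof
  assume "\<exists>c>0::real. \<forall>H D. horizon H \<and> Gbar H \<and> value_dist D \<longrightarrow>
            (\<exists>p::real. integral\<^sup>L (joint D H) (thr_reward p) \<ge> c * integral\<^sup>L (joint D H) prophet)"
  then obtain c :: real where c: "0 < c"
    and approx: "\<And>H D. horizon H \<Longrightarrow> Gbar H \<Longrightarrow> value_dist D \<Longrightarrow>
      \<exists>p. c * integral\<^sup>L (joint D H) prophet \<le> integral\<^sup>L (joint D H) (thr_reward p)"
    by blast
  obtain K where K: "1 \<le> K" "12 / c < harm (Suc K) - 1"
    using harm_Suc_exceeds by blast
  let ?J = "joint (hard_values K) (hard_horizon K)"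
  obtain p where p: "c * integral\<^sup>L ?J prophet \<le> integral\<^sup>L ?J (thr_reward p)"
    using approx[OF horizon_hard_horizon Gbar_hard_horizon value_dist_hard_values] K(1) by blast
  have "12 < c * (harm (Suc K) - 1)"
    using K(2) c by (simp add: divide_less_eq mult.commute)
  from mult_strict_left_mono[OF this, of "(real K + 1) / 4"]
  have "3 * (real K + 1) < (real K + 1) / 4 * (c * (harm (Suc K) - 1))"
    by simp
  also have "\<dots> = c * ((real K + 1) / 4 * (harm (Suc K) - 1))"
    by (rule mult.left_commute)
  also have "\<dots> \<le> c * integral\<^sup>L ?J prophet"
    using integral_prophet_hard_ge[OF K(1)] c by simp
  also have "\<dots> \<le> integral\<^sup>L ?J (thr_reward p)"
    by (rule p)
  also have "\<dots> \<le> 3 * (real K + 1)"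
    by (rule integral_thr_reward_hard_le[OF K(1)])
  finally show False
    by simp
qed

end
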